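(* Let $X=\{x_0,\ldots,x_m\}$ and $X'=\{x'_0,\ldots,x'_q\}$. The multiplicative dynamic feedback product $c\,\check{@}\,d:=c\,\tilde\circ\,\delta_{(d^{\sqcup\!\sqcup-1}\circ c)^{\circ-1}}$ is a right group action of the group $(\mathbb{R}^m_{pi}\langle\langle X'\rangle\rangle,\sqcup\!\sqcup,\mathbb 1)$ on the set $\mathbb{R}^q\langle\langle X\rangle\rangle$; that is, for all $c\in\mathbb{R}^q\langle\langle X\rangle\rangle$ and all purely improper $d_1,d_2\in\mathbb{R}^m\langle\langle X'\rangle\rangle$, $c\,\check{@}\,\mathbb 1=c$ and $(c\,\check{@}\,d_1)\,\check{@}\,d_2=c\,\check{@}\,(d_1\sqcup\!\sqcup d_2)$.
   Context: $\mathbb{R}^\ell\langle\langle X\rangle\rangle$: formal power series in noncommuting letters with coefficients in $\mathbb{R}^\ell$; componentwise products; $\mathbb{R}^m_{pi}\langle\langle X'\rangle\rangle$ is the set of purely improper series (every component has nonzero constant term); $\mathbb 1=[1\cdots1]^t$ viewed as a constant series. Shuffle product $\sqcup\!\sqcup$: bilinear, $(x_i\eta)\sqcup\!\sqcup(x_j\xi)=x_i(\eta\sqcup\!\sqcup x_j\xi)+x_j(x_i\eta\sqcup\!\sqcup\xi)$, $\eta\sqcup\!\sqcup\emptyset=\emptyset\sqcup\!\sqcup\eta=\eta$; $d^{\sqcup\!\sqcup-1}$ the componentwise shuffle inverse. Composition product: $c\circ e=\sum_{\eta\in X'^\ast}(c,\eta)\psi_e(\eta)(\mathbf 1)$ for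 $c\in\mathbb{R}^k\langle\langle X'\rangle\rangle$, $e\in\mathbb{R}^q\langle\langle X\rangle\rangle$, with $\mathbf 1=1\emptyset$, $\psi_e(x'_i)(w)=x_0(e_i\sqcup\!\sqcup w)$, $e_0:=\mathbf 1$, multiplicative (concatenation to composition). Multiplicative mixed composition: $c\,\tilde\circ\,\delta_g=\sum_{\eta\in X^\ast}(c,\eta)\bar\phi_g(\eta)(\mathbf 1)$ with $\bar\phi_g(x_0)(w)=x_0w$, $\bar\phi_g(x_i)(w)=x_i(g_i\sqcup\!\sqcup w)$ ($i\ge1$), multiplicative. For purely improper $g\in\mathbb{R}^m\langle\langle X\rangle\rangle$, $g^{\circ-1}$ is the unique $h\in\mathbb{R}^m\langle\langle X\rangle\rangle$ with $h=g^{\sqcup\!\sqcup-1}\,\tilde\circ\,\delta_h$. *)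

theory Defs
  imports "HOL-Analysis.Infinite_Sum"
begin

text \<open>A letter x_i of an alphabet X = {x_0,...,x_n} is the natural number i,
a word is a list of letters, a scalar series is a function from words to reals,
and an R^l-valued series is a function nat => ser whose components 1..l are meaningful.\<close>

type_synonym ser = "nat list \<Rightarrow> real"
type_synonym vser = "nat \<Rightarrow> ser"

definition ser1 :: ser where
  "ser1 = (\<lambda>w. if w = [] then 1 else 0)"

definition vone :: vser where
  "vone = (\<lambda>i. ser1)"

definition lcons :: "nat \<Rightarrow> ser \<Rightarrow> ser" where
  "lcons x a = (\<lambda>w. case w of [] \<Rightarrow> 0 | z # w' \<Rightarrow> (if z = x then a w' else 0))"

text \<open>Shuffle of two words, as the series of coefficients (u shuffle v, w),
 following the recursion (x_i u) sh (x_j v) = x_i (u sh x_j v) + x_j (x_i u sh v),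
 u sh empty = empty sh u = u.\<close>
fun wsh :: "nat list \<Rightarrow> nat list \<Rightarrow> ser" where
  "wsh [] v = (\<lambda>w. if w = v then 1 else 0)"
| "wsh (x # u) [] = (\<lambda>w. if w = x # u then 1 else 0)"
| "wsh (x # u) (y # v) =
     (\<lambda>w. lcons x (wsh u (y # v)) w + lcons y (wsh (x # u) v) w)"

definition shuf :: "ser \<Rightarrow> ser \<Rightarrow> ser" where
  "shuf a b = (\<lambda>w. \<Sum>\<^sub>\<infinity>(u, v)\<in>UNIV. a u * b v * wsh u v w)"

definition vshuf :: "vser \<Rightarrow> vser \<Rightarrow> vser" where
  "vshuf a b = (\<lambda>i. shuf (a i) (b i))"

definition shinv :: "ser \<Rightarrow> ser" where
  "shinv a = (THE b. shuf a b = ser1)"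

definition vshinv :: "vser \<Rightarrow> vser" where
  "vshinv a = (\<lambda>i. shinv (a i))"

definition pimp :: "nat \<Rightarrow> vser \<Rightarrow> bool" where
  "pimp l d \<longleftrightarrow> (\<forall>i\<in>{1..l}. d i [] \<noteq> 0)"

fun psi :: "vser \<Rightarrow> nat list \<Rightarrow> ser \<Rightarrow> ser" where
  "psi e [] w = w"
| "psi e (i # eta) w = lcons 0 (shuf (if i = 0 then ser1 else e i) (psi e eta w))"

text \<open>Composition product c o e, for c over X' = {x'_0..x'_q}, e in R^q<<X>>.\<close>
definition comp :: "nat \<Rightarrow> vser \<Rightarrow> vser \<Rightarrow> vser" where
  "comp q c e = (\<lambda>j w. \<Sum>\<^sub>\<infinity>eta\<in>{eta. set eta \<subseteq> {..q}}. c j eta * psi e eta ser1 w)"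

fun phibar :: "vser \<Rightarrow> nat list \<Rightarrow> ser \<Rightarrow> ser" where
  "phibar g [] w = w"
| "phibar g (i # eta) w =
     (if i = 0 then lcons 0 (phibar g eta w) else lcons i (shuf (g i) (phibar g eta w)))"

definition mixcomp :: "nat \<Rightarrow> vser \<Rightarrow> vser \<Rightarrow> vser" where
  "mixcomp m c g = (\<lambda>j w. \<Sum>\<^sub>\<infinity>eta\<in>{eta. set eta \<subseteq> {..m}}. c j eta * phibar g eta ser1 w)"

text \<open>Group inverse g^{o-1}: the unique h with h = g^{sh-1} mixcomp delta_h.\<close>
definition cinv :: "nat \<Rightarrow> vser \<Rightarrow> vser" where
  "cinv m g = (THE h. h = mixcomp m (vshinv g) h)"

definition fbp :: "nat \<Rightarrow> nat \<Rightarrow> vser \<Rightarrow> vser \<Rightarrow> vser" where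
  "fbp m q c d = mixcomp m c (cinv m (comp q (vshinv d) c))"

definition ser_eq :: "nat \<Rightarrow> nat \<Rightarrow> vser \<Rightarrow> vser \<Rightarrow> bool" where
  "ser_eq l n a b \<longleftrightarrow> (\<forall>j\<in>{1..l}. \<forall>w. set w \<subseteq> {..n} \<longrightarrow> a j w = b j w)"

end

theory Submission
  imports Defs
begin

text \<open>Both the composition product and the mixed composition act on series as linear maps F
  with F a [] = a [] and a Leibniz-type recursion for left shifts,
  lshift x (F a) = \<Sum>i. K x i \<bullet> F (lshift i a), where \<bullet> is the shuffle product.
  Such maps are shuffle homomorphisms, are determined by their kernel K, and compose to maps of
  the same kind. The unknown series of the argument (shuffle inverses and the group inverse of the
  composition group) are fixed points of causal maps, whose value at a word depends only on
  values at shorter words, so they exist and are unique.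

  Write c \<diamond> h for the mixed composition of c with \<delta>(h). Applying the homomorphism
  a \<mapsto> a \<diamond> h to the equation defining h = (d\<inverse> \<circ> c)\<inverse> gives h i = d i \<circ> y
  for y = c @ d, so c @ d is the unique solution of the causal equation y = c \<diamond> (d \<circ> y).
  Both laws of the action follow by checking that both sides solve the same equation: for d = 1
  it reduces to c \<diamond> 1 = c, and for the iterated product the composition rule
  (c \<diamond> a) \<diamond> b = c \<diamond> ((a \<diamond> b) \<bullet> b) together with
  (d1 \<circ> y) \<bullet> (d2 \<circ> y) = (d1 \<bullet> d2) \<circ> y yields the equation for d1 \<bullet> d2.\<close>

section \<open>The shuffle product\<close>

lemma infsum_finite_support:
  fixes f :: "'a \<Rightarrow> real"
  assumes "finite E" "E \<subseteq> A" "\<And>x. x \<in> A \<Longrightarrow> x \<notin> E \<Longrightarrow> f x = 0"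
  shows "infsum f A = sum f E"
proof -
  have "infsum f A = infsum f E"
    by (rule infsum_cong_neutral) (use assms in auto)
  with assms(1) show ?thesis by simp
qed

lemma summable_on_finite_support:
  fixes f :: "'a \<Rightarrow> real"
  assumes "finite E" "\<And>x. x \<notin> E \<Longrightarrow> f x = 0"
  shows "f summable_on A"
proof -
  have "f summable_on (A \<inter> E) \<longleftrightarrow> f summable_on A"
    by (rule summable_on_cong_neutral) (use assms in auto)
  with assms(1) show ?thesis by simp
qed

definition lshift :: "nat \<Rightarrow> ser \<Rightarrow> ser" where
  "lshift x a = (\<lambda>w. a (x # w))"

lemma lshift_apply: "lshift x a w = a (x # w)"
  by (simp add: lshift_def)

lemma ser1_Nil[simp]: "ser1 [] = 1" and ser1_Cons[simp]: "ser1 (x # w) = 0"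
  by (simp_all add: ser1_def)

lemma lshift_ser1[simp]: "lshift x ser1 = (\<lambda>_. 0)"
  and lshift_zero[simp]: "lshift x (\<lambda>_. 0) = (\<lambda>_. 0)"
  and lshift_add[simp]: "lshift x (\<lambda>v. a v + b v) = (\<lambda>v. lshift x a v + lshift x b v)"
  by (simp_all add: lshift_def)

lemma wsh_Nil_right: "wsh u [] w = (if w = u then 1 else 0)"
  by (cases u) auto

lemma wsh_Nil_word: "wsh u v [] = (if u = [] \<and> v = [] then 1 else 0)"
  by (induction u v rule: wsh.induct) (auto simp: lcons_def)

lemma wsh_Cons_word: "wsh u v (x # w) =
   (case u of [] \<Rightarrow> 0 | y # u' \<Rightarrow> if y = x then wsh u' v w else 0)
 + (case v of [] \<Rightarrow> 0 | z # v' \<Rightarrow> if z = x then wsh u v' w else 0)"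
  by (induction u v rule: wsh.induct) (auto simp: lcons_def wsh_Nil_right split: list.splits)

lemma wsh_nonzero_imp:
  assumes "wsh u v w \<noteq> 0"
  shows "set u \<subseteq> set w \<and> length u \<le> length w \<and> set v \<subseteq> set w \<and> length v \<le> length w"
  using assms
proof (induction w arbitrary: u v)
  case Nil
  then show ?case by (auto simp: wsh_Nil_word split: if_splits)
next
  case (Cons x w)
  from Cons.prems
  have "(case u of [] \<Rightarrow> 0 | y # u' \<Rightarrow> if y = x then wsh u' v w else 0) \<noteq> 0
    \<or> (case v of [] \<Rightarrow> 0 | z # v' \<Rightarrow> if z = x then wsh u v' w else 0) \<noteq> (0::real)"
    by (auto simp: wsh_Cons_word)
  then consider u' where "u = x # u'" "wsh u' v w \<noteq> 0" | v' where "v = x # v'" "wsh u v' w \<noteq> 0"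
    by (auto split: list.splits if_splits)
  then show ?case
  proof cases
    case 1
    then show ?thesis using Cons.IH[of u' v] by auto
  next
    case 2
    then show ?thesis using Cons.IH[of u v'] by auto
  qed
qed

lemma shuf_Nil[simp]: "shuf a b [] = a [] * b []"
proof -
  have "shuf a b [] = (\<Sum>(u, v)\<in>{([], [])}. a u * b v * wsh u v [])"
    unfolding shuf_def by (rule infsum_finite_support) (auto simp: wsh_Nil_word split: if_splits)
  then show ?thesis by (simp add: wsh_Nil_word)
qed

text \<open>Together with \<open>shuf_Nil\<close> this recursion determines the shuffle product;
  everything below is derived from it by induction on the length of the word, never from the
  infinite sum.\<close>
lemma shuf_Cons: "shuf a b (x # w) = shuf (lshift x a) b w + shuf a (lshift x b) w"
proof -
  define S where "S = {u. set u \<subseteq> set (x # w) \<and> length u \<le> length (x # w)}"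
  have fin: "finite (S \<times> S)"
    unfolding S_def by (simp add: finite_lists_length_le)
  define F1 where "F1 = (\<lambda>(u, v). a u * b v *
    (case u of [] \<Rightarrow> 0 | y # u' \<Rightarrow> if y = x then wsh u' v w else 0))"
  define F2 where "F2 = (\<lambda>(u, v). a u * b v *
    (case v of [] \<Rightarrow> 0 | z # v' \<Rightarrow> if z = x then wsh u v' w else 0))"
  have split: "(\<lambda>(u, v). a u * b v * wsh u v (x # w)) = (\<lambda>p. F1 p + F2 p)"
    by (auto simp: F1_def F2_def wsh_Cons_word algebra_simps)
  have "F1 summable_on UNIV"
    by (rule summable_on_finite_support[OF fin])
       (auto simp: F1_def S_def split: list.splits if_splits dest!: wsh_nonzero_imp)
  moreover have "F2 summable_on UNIV"
    by (rule summable_on_finite_support[OF fin])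
       (auto simp: F2_def S_def split: list.splits if_splits dest!: wsh_nonzero_imp)
  ultimately have "shuf a b (x # w) = infsum F1 UNIV + infsum F2 UNIV"
    unfolding shuf_def split by (simp add: infsum_add)
  also have "infsum F1 UNIV = infsum F1 (range (\<lambda>(u', v). (x # u', v)))"
    by (rule infsum_cong_neutral) (auto simp: F1_def image_iff split: list.splits)
  also have "\<dots> = shuf (lshift x a) b w"
    unfolding shuf_def
    by (subst infsum_reindex) (auto simp: inj_on_def F1_def lshift_apply intro!: infsum_cong)
  also have "infsum F2 UNIV = infsum F2 (range (\<lambda>(u, v'). (u, x # v')))"
    by (rule infsum_cong_neutral) (auto simp: F2_def image_iff split: list.splits)
  also have "\<dots> = shuf a (lshift x b) w"
    unfolding shuf_def
    by (subst infsum_reindex) (auto simp: inj_on_def F2_def lshift_apply intro!: infsum_cong)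
  finally show ?thesis .
qed

lemma shuf_cong_le:
  assumes "\<And>v. length v \<le> length w \<Longrightarrow> a v = a' v"
    and "\<And>v. length v \<le> length w \<Longrightarrow> b v = b' v"
  shows "shuf a b w = shuf a' b' w"
  using assms
proof (induction w arbitrary: a b a' b')
  case (Cons x w)
  have "shuf (lshift x a) b w = shuf (lshift x a') b' w"
    by (rule Cons.IH) (simp_all add: Cons.prems lshift_apply)
  moreover have "shuf a (lshift x b) w = shuf a' (lshift x b') w"
    by (rule Cons.IH) (simp_all add: Cons.prems lshift_apply)
  ultimately show ?case by (simp add: shuf_Cons)
qed simp

lemma shuf_cong_less:
  assumes "a [] = 0" and "\<And>v. length v < length w \<Longrightarrow> b v = b' v"
  shows "shuf a b w = shuf a b' w"
  using assms
proof (induction w arbitrary: a b b')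
  case (Cons x w)
  have "shuf (lshift x a) b w = shuf (lshift x a) b' w"
    by (rule shuf_cong_le) (simp_all add: Cons.prems lshift_apply)
  moreover have "shuf a (lshift x b) w = shuf a (lshift x b') w"
    by (rule Cons.IH) (simp_all add: Cons.prems lshift_apply)
  ultimately show ?case by (simp add: shuf_Cons)
qed simp

lemma shuf_commute: "shuf a b = shuf b a"
proof
  show "shuf a b w = shuf b a w" for w
    by (induction w arbitrary: a b) (simp_all add: shuf_Cons)
qed

lemma shuf_zero_right[simp]: "shuf a (\<lambda>_. 0) = (\<lambda>_. 0)"
proof
  show "shuf a (\<lambda>_. 0) w = 0" for w
    by (induction w arbitrary: a) (simp_all add: shuf_Cons)
qed

lemma shuf_zero_left[simp]: "shuf (\<lambda>_. 0) a = (\<lambda>_. 0)"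
  by (simp add: shuf_commute[of _ a])

lemma shuf_eq_0_if_short_zero:
  assumes "\<And>v. length v \<le> length w \<Longrightarrow> b v = 0"
  shows "shuf a b w = 0"
  using shuf_cong_le[of w a a b "\<lambda>_. 0"] assms by simp

lemma shuf_add_right: "shuf a (\<lambda>v. b v + c v) = (\<lambda>w. shuf a b w + shuf a c w)"
proof
  show "shuf a (\<lambda>v. b v + c v) w = shuf a b w + shuf a c w" for w
    by (induction w arbitrary: a b c) (simp_all add: shuf_Cons algebra_simps)
qed

lemma shuf_add_left: "shuf (\<lambda>v. b v + c v) a = (\<lambda>w. shuf b a w + shuf c a w)"
  by (simp add: shuf_commute[of _ a] shuf_add_right)

lemma shuf_scale_right: "shuf a (\<lambda>v. r * b v) = (\<lambda>w. r * shuf a b w)"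
proof
  show "shuf a (\<lambda>v. r * b v) w = r * shuf a b w" for w
  proof (induction w arbitrary: a b)
    case (Cons x w)
    have "lshift x (\<lambda>v. r * b v) = (\<lambda>v. r * lshift x b v)" by (simp add: lshift_def)
    with Cons show ?case by (simp add: shuf_Cons algebra_simps)
  qed simp
qed

lemma shuf_scale_left: "shuf (\<lambda>v. r * b v) a = (\<lambda>w. r * shuf b a w)"
  by (simp add: shuf_commute[of _ a] shuf_scale_right)

lemma shuf_sum_right:
  "finite A \<Longrightarrow> shuf a (\<lambda>v. \<Sum>i\<in>A. f i v) = (\<lambda>w. \<Sum>i\<in>A. shuf a (f i) w)"
  by (induction A rule: finite_induct) (simp_all add: shuf_add_right)

lemma shuf_sum_left:
  "finite A \<Longrightarrow> shuf (\<lambda>v. \<Sum>i\<in>A. f i v) a = (\<lambda>w. \<Sum>i\<in>A. shuf (f i) a w)"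
  by (simp add: shuf_commute[of _ a] shuf_sum_right)

lemma shuf_ser1_left[simp]: "shuf ser1 b = b"
proof
  show "shuf ser1 b w = b w" for w
    by (induction w arbitrary: b) (simp_all add: shuf_Cons lshift_apply)
qed

lemma lshift_shuf: "lshift x (shuf a b) = (\<lambda>w. shuf (lshift x a) b w + shuf a (lshift x b) w)"
  by (simp add: lshift_def shuf_Cons)

lemma shuf_assoc: "shuf (shuf a b) c = shuf a (shuf b c)"
proof
  show "shuf (shuf a b) c w = shuf a (shuf b c) w" for w
    by (induction w arbitrary: a b c)
       (simp_all add: shuf_Cons lshift_shuf shuf_add_left shuf_add_right)
qed

lemma shuf_left_commute: "shuf a (shuf b c) = shuf b (shuf a c)"
  by (metis shuf_assoc shuf_commute)

lemmas shuf_ac = shuf_assoc shuf_commute shuf_left_commute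

lemma shuf_inverse_unique: "shuf a b = ser1 \<Longrightarrow> shuf a b' = ser1 \<Longrightarrow> b = b'"
  by (metis shuf_assoc shuf_commute shuf_ser1_left)

section \<open>Fixed points of causal maps\<close>

definition causal_on :: "'i set \<Rightarrow> (('i \<Rightarrow> ser) \<Rightarrow> ('i \<Rightarrow> ser)) \<Rightarrow> bool" where
  "causal_on J T \<longleftrightarrow> (\<forall>h h' w. (\<forall>j\<in>J. \<forall>v. length v < length w \<longrightarrow> h j v = h' j v)
     \<longrightarrow> (\<forall>j\<in>J. T h j w = T h' j w))"

lemma causal_onI:
  assumes "\<And>h h' w j. j \<in> J \<Longrightarrow> (\<And>j v. j \<in> J \<Longrightarrow> length v < length w \<Longrightarrow> h j v = h' j v)
    \<Longrightarrow> T h j w = T h' j w"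
  shows "causal_on J T"
  using assms unfolding causal_on_def by blast

lemma causal_onD:
  assumes "causal_on J T" "j \<in> J" "\<And>j v. j \<in> J \<Longrightarrow> length v < length w \<Longrightarrow> h j v = h' j v"
  shows "T h j w = T h' j w"
  using assms unfolding causal_on_def by blast

lemma causal_on_fixpoint_unique:
  assumes T: "causal_on J T"
    and h: "\<And>j. j \<in> J \<Longrightarrow> h j = T h j" and h': "\<And>j. j \<in> J \<Longrightarrow> h' j = T h' j"
    and "j \<in> J"
  shows "h j = h' j"
proof -
  have "\<forall>j\<in>J. h j w = h' j w" for w
  proof (induction "length w" arbitrary: w rule: less_induct)
    case less
    have "T h j w = T h' j w" if "j \<in> J" for j
      by (rule causal_onD[OF T that]) (use less in blast)
    then show ?case by (metis h h')
  qed
  with \<open>j \<in> J\<close> show ?thesis by blast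
qed

lemma causal_on_UNIV_fixpoint_exists:
  assumes T: "causal_on UNIV T"
  shows "\<exists>h. h = T h"
proof -
  define approx where "approx k = (T ^^ k) (\<lambda>_ _. 0)" for k
  have agree: "approx k j w = approx k' j w" if "length w < k" "length w < k'" for k k' j w
    using that
  proof (induction "length w" arbitrary: w k k' j rule: less_induct)
    case less
    obtain l l' where k: "k = Suc l" and k': "k' = Suc l'"
      using less.prems by (meson less_imp_Suc_add)
    have "T (approx l) j w = T (approx l') j w"
    proof (rule causal_onD[OF T])
      fix j v assume "length (v :: nat list) < length w"
      then show "approx l j v = approx l' j v"
        using less.prems k k' by (intro less.hyps) auto
    qed simp
    with k k' show ?case by (simp add: approx_def)
  qed
  define H where "H j w = approx (Suc (length w)) j w" for j w
  have "T H j w = H j w" for j w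
  proof -
    have "T H j w = T (approx (Suc (length w))) j w"
      by (rule causal_onD[OF T]) (auto simp: H_def intro: agree)
    also have "\<dots> = approx (Suc (Suc (length w))) j w"
      by (simp add: approx_def)
    also have "\<dots> = H j w"
      unfolding H_def by (rule agree) simp_all
    finally show ?thesis .
  qed
  then show ?thesis by (metis ext)
qed

lemma causal_on_UNIV_ex1_fixpoint:
  assumes T: "causal_on UNIV T"
  shows "\<exists>!h. h = T h"
proof -
  obtain h where h: "h = T h"
    using causal_on_UNIV_fixpoint_exists[OF T] by blast
  have "h' = h" if "h' = T h'" for h'
    using causal_on_fixpoint_unique[OF T, of h' h] that h by auto
  with h show ?thesis by blast
qed

lemma shuf_shinv:
  assumes a0: "a [] \<noteq> 0"
  shows "shuf a (shinv a) = ser1"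
proof -
  define a' where "a' w = (if w = [] then 0 else a w)" for w
  have a_split: "a = (\<lambda>w. a [] * ser1 w + a' w)"
    by (auto simp: a'_def ser1_def)
  define T where "T H (u :: unit) w = (ser1 w - shuf a' (H ()) w) / a []" for H u w
  have "causal_on UNIV T"
  proof (rule causal_onI)
    fix H H' :: "unit \<Rightarrow> ser" and w :: "nat list" and u
    assume "\<And>j v. j \<in> UNIV \<Longrightarrow> length v < length w \<Longrightarrow> H j v = H' j v"
    then have "shuf a' (H ()) w = shuf a' (H' ()) w"
      by (intro shuf_cong_less) (simp_all add: a'_def)
    then show "T H u w = T H' u w"
      by (simp add: T_def)
  qed
  then obtain H where H: "H = T H"
    using causal_on_UNIV_fixpoint_exists by blast
  have "shuf a (H ()) = ser1"
  proof
    fix w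
    have "a [] * H () w = ser1 w - shuf a' (H ()) w"
      using fun_cong[OF fun_cong[OF H, of "()"], of w] a0 by (simp add: T_def)
    then show "shuf a (H ()) w = ser1 w"
      by (subst a_split) (simp add: shuf_add_left shuf_scale_left)
  qed
  then have "\<exists>!b. shuf a b = ser1"
    using shuf_inverse_unique by blast
  then show ?thesis unfolding shinv_def by (rule theI')
qed

lemma shinv_Nil: "a [] \<noteq> 0 \<Longrightarrow> a [] * shinv a [] = 1"
  using fun_cong[OF shuf_shinv, of a "[]"] by simp

section \<open>Substitution operators\<close>

text \<open>F a = \<Sum>\<eta>. a \<eta> \<cdot> \<Phi> \<eta> 1 for the multiplicative \<Phi> with
  \<Phi> [i] w = \<Sum>x. lcons x (K x i \<bullet> w), stated through the left-shift recursion that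
  characterises it; psi and phibar are of this form.\<close>

definition subst_op :: "nat set \<Rightarrow> (nat \<Rightarrow> nat \<Rightarrow> ser) \<Rightarrow> (ser \<Rightarrow> ser) \<Rightarrow> bool" where
  "subst_op I K F \<longleftrightarrow> finite I \<and> (\<forall>a. F a [] = a [])
     \<and> (\<forall>a x w. F a (x # w) = (\<Sum>i\<in>I. shuf (K x i) (F (lshift i a)) w))"

context
  fixes I K F
  assumes F: "subst_op I K F"
begin

lemma subst_op_finite: "finite I"
  and subst_op_Nil[simp]: "F a [] = a []"
  and subst_op_Cons: "F a (x # w) = (\<Sum>i\<in>I. shuf (K x i) (F (lshift i a)) w)"
  using F by (simp_all add: subst_op_def)

lemma subst_op_lshift: "lshift x (F a) = (\<lambda>w. \<Sum>i\<in>I. shuf (K x i) (F (lshift i a)) w)"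
  by (simp add: lshift_def subst_op_Cons)

lemma subst_op_add: "F (\<lambda>v. a v + b v) = (\<lambda>w. F a w + F b w)"
proof
  show "F (\<lambda>v. a v + b v) w = F a w + F b w" for w
  proof (induction "length w" arbitrary: w a b rule: less_induct)
    case less
    show ?case
    proof (cases w)
      case (Cons x w')
      have "shuf (K x i) (F (\<lambda>v. lshift i a v + lshift i b v)) w'
          = shuf (K x i) (\<lambda>v. F (lshift i a) v + F (lshift i b) v) w'" for i
        by (rule shuf_cong_le) (simp_all add: Cons less.hyps)
      then show ?thesis
        by (simp add: Cons subst_op_Cons shuf_add_right sum.distrib)
    qed simp
  qed
qed

lemma subst_op_zero[simp]: "F (\<lambda>_. 0) = (\<lambda>_. 0)"
  using subst_op_add[of "\<lambda>_. 0" "\<lambda>_. 0"] by (metis add_cancel_left_left)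

lemma subst_op_sum:
  "finite A \<Longrightarrow> F (\<lambda>v. \<Sum>j\<in>A. f j v) = (\<lambda>w. \<Sum>j\<in>A. F (f j) w)"
  by (induction A rule: finite_induct) (simp_all add: subst_op_add)

lemma subst_op_ser1[simp]: "F ser1 = ser1"
proof
  show "F ser1 w = ser1 w" for w
    by (cases w) (simp_all add: subst_op_Cons)
qed

lemma subst_op_sum_shuf_delta:
  assumes "finite J" "c \<in> J"
  shows "(\<Sum>j\<in>J. shuf (L j) (F (if j = c then Y else (\<lambda>_. 0))) w) = shuf (L c) (F Y) w"
proof -
  have "(\<Sum>j\<in>J. shuf (L j) (F (if j = c then Y else (\<lambda>_. 0))) w)
      = (\<Sum>j\<in>J. if j = c then shuf (L c) (F Y) w else 0)"
    by (rule sum.cong) simp_all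
  with assms show ?thesis by simp
qed

lemma subst_op_shuf: "F (shuf a b) = shuf (F a) (F b)"
proof
  show "F (shuf a b) w = shuf (F a) (F b) w" for w
  proof (induction "length w" arbitrary: w a b rule: less_induct)
    case less
    show ?case
    proof (cases w)
      case (Cons x w')
      have "shuf (K x i) (F (lshift i (shuf a b))) w'
          = shuf (K x i) (\<lambda>v. shuf (F (lshift i a)) (F b) v + shuf (F a) (F (lshift i b)) v) w'" for i
        by (rule shuf_cong_le) (simp_all add: Cons less.hyps lshift_shuf subst_op_add)
      then show ?thesis
        using subst_op_finite
        by (simp add: Cons subst_op_Cons shuf_Cons subst_op_lshift shuf_add_right sum.distrib
            shuf_sum_left shuf_sum_right shuf_ac)
    qed simp
  qed
qed

end

lemma subst_op_cong_less:
  assumes F: "subst_op I K F" and F': "subst_op I K' F'"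
    and K: "\<And>x i v. i \<in> I \<Longrightarrow> length v < length w \<Longrightarrow> K x i v = K' x i v"
  shows "F a w = F' a w"
  using K
proof (induction "length w" arbitrary: w a rule: less_induct)
  case less
  show ?case
  proof (cases w)
    case (Cons x w')
    have "shuf (K x i) (F (lshift i a)) w' = shuf (K' x i) (F' (lshift i a)) w'" if "i \<in> I" for i
    proof (rule shuf_cong_le)
      fix v :: "nat list" assume "length v \<le> length w'"
      then show "K x i v = K' x i v" and "F (lshift i a) v = F' (lshift i a) v"
        using Cons that by (auto intro!: less.hyps less.prems)
    qed
    then show ?thesis
      by (simp add: Cons subst_op_Cons[OF F] subst_op_Cons[OF F'])
  qed (simp add: subst_op_Nil[OF F] subst_op_Nil[OF F'])
qed

lemma subst_op_unique:
  assumes "subst_op I K F" "subst_op I K' F'" "\<And>x i. i \<in> I \<Longrightarrow> K x i = K' x i"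
  shows "F = F'"
  using subst_op_cong_less[OF assms(1,2)] assms(3) by (intro ext) auto

lemma subst_op_comp:
  assumes F: "subst_op I K F" and G: "subst_op J L G"
  shows "subst_op I (\<lambda>x i w. \<Sum>j\<in>J. shuf (L x j) (G (K j i)) w) (G \<circ> F)"
  unfolding subst_op_def
proof (intro conjI allI)
  show "finite I" by (rule subst_op_finite[OF F])
  fix a x w
  have I: "finite I" and J: "finite J"
    using subst_op_finite[OF F] subst_op_finite[OF G] .
  have "(G \<circ> F) a (x # w) = (\<Sum>j\<in>J. shuf (L x j) (G (lshift j (F a))) w)"
    by (simp add: subst_op_Cons[OF G])
  also have "\<dots> = (\<Sum>j\<in>J. \<Sum>i\<in>I. shuf (shuf (L x j) (G (K j i))) (G (F (lshift i a))) w)"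
    by (simp add: subst_op_lshift[OF F] subst_op_sum[OF G I] subst_op_shuf[OF G]
        shuf_sum_right[OF I] shuf_assoc)
  also have "\<dots> = (\<Sum>i\<in>I. shuf (\<lambda>w. \<Sum>j\<in>J. shuf (L x j) (G (K j i)) w) ((G \<circ> F) (lshift i a)) w)"
    by (subst sum.swap) (simp add: shuf_sum_left[OF J])
  finally show "(G \<circ> F) a (x # w)
      = (\<Sum>i\<in>I. shuf (\<lambda>w. \<Sum>j\<in>J. shuf (L x j) (G (K j i)) w) ((G \<circ> F) (lshift i a)) w)" .
qed (simp add: subst_op_Nil[OF F] subst_op_Nil[OF G])

lemma shuf_infsum_finite_support:
  assumes "finite E" "E \<subseteq> B"
    and "\<And>eta v. eta \<in> B \<Longrightarrow> eta \<notin> E \<Longrightarrow> length v \<le> length w \<Longrightarrow> f eta v = 0"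
  shows "shuf p (\<lambda>v. \<Sum>\<^sub>\<infinity>eta\<in>B. c eta * f eta v) w = (\<Sum>eta\<in>E. c eta * shuf p (f eta) w)"
proof -
  have "shuf p (\<lambda>v. \<Sum>\<^sub>\<infinity>eta\<in>B. c eta * f eta v) w = shuf p (\<lambda>v. \<Sum>eta\<in>E. c eta * f eta v) w"
    by (rule shuf_cong_le) (use assms in \<open>auto intro!: infsum_finite_support\<close>)
  then show ?thesis
    by (simp add: shuf_sum_right[OF assms(1)] shuf_scale_right)
qed

definition word_series :: "nat set \<Rightarrow> (nat list \<Rightarrow> ser) \<Rightarrow> ser \<Rightarrow> ser" where
  "word_series A P a = (\<lambda>w. \<Sum>\<^sub>\<infinity>eta\<in>{eta. set eta \<subseteq> A}. a eta * P eta w)"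

lemma lcons_Nil[simp]: "lcons y s [] = 0"
  and lcons_Cons[simp]: "lcons y s (x # w) = (if x = y then s w else 0)"
  by (simp_all add: lcons_def)

text \<open>P \<eta> plays the role of \<Phi> \<eta> 1, where \<Phi> [k] writes the letter l k:
  l k = k for phibar and l k = 0 for psi.\<close>
lemma subst_op_word_series:
  fixes A :: "nat set" and P :: "nat list \<Rightarrow> ser" and l :: "nat \<Rightarrow> nat" and E :: "nat \<Rightarrow> ser"
  assumes A: "finite A" and P_Nil: "P [] = ser1"
    and P_Cons: "\<And>k eta. P (k # eta) = lcons (l k) (shuf (E k) (P eta))"
  shows "subst_op A (\<lambda>x k. if x = l k then E k else (\<lambda>_. 0)) (word_series A P)"
proof -
  define W where "W n = {eta. set eta \<subseteq> A \<and> length eta \<le> n}" for n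
  have W: "finite (W n)" "W n \<subseteq> {eta. set eta \<subseteq> A}" for n
    using A by (auto simp: W_def finite_lists_length_le)
  have P_short: "P eta w = 0" if "length w < length eta" for eta w
    using that
  proof (induction eta arbitrary: w)
    case (Cons k eta)
    then show ?case
      by (cases w) (auto simp: P_Cons intro!: shuf_eq_0_if_short_zero)
  qed simp
  have outside: "P eta w = 0" if "eta \<in> {eta. set eta \<subseteq> A}" "eta \<notin> W n" "length w \<le> n" for eta w n
    using that by (intro P_short) (auto simp: W_def)
  have series_Nil: "word_series A P a [] = a []" for a
  proof -
    have "word_series A P a [] = (\<Sum>eta\<in>{[]}. a eta * P eta [])"
      unfolding word_series_def by (rule infsum_finite_support) (auto intro: P_short)
    then show ?thesis by (simp add: P_Nil)
  qed
  have Cons_image: "(\<lambda>(k, eta). k # eta) ` (A \<times> W n) = W (Suc n) - {[]}" for n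
  proof (intro equalityI subsetI)
    fix eta assume "eta \<in> W (Suc n) - {[]}"
    then show "eta \<in> (\<lambda>(k, eta). k # eta) ` (A \<times> W n)"
      by (cases eta) (auto simp: W_def image_iff)
  qed (auto simp: W_def)
  have series_Cons: "word_series A P a (x # w)
      = (\<Sum>k\<in>A. shuf (if x = l k then E k else (\<lambda>_. 0)) (word_series A P (lshift k a)) w)" for a x w
  proof -
    have "word_series A P a (x # w) = (\<Sum>eta\<in>W (Suc (length w)). a eta * P eta (x # w))"
      unfolding word_series_def by (rule infsum_finite_support) (use W outside in auto)
    also have "\<dots> = (\<Sum>eta\<in>W (Suc (length w)) - {[]}. a eta * P eta (x # w))"
      by (rule sum.mono_neutral_right) (auto simp: W P_Nil)
    also have "\<dots> = (\<Sum>(k, eta)\<in>A \<times> W (length w). a (k # eta) * P (k # eta) (x # w))"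
      unfolding Cons_image[symmetric] by (subst sum.reindex) (auto simp: inj_on_def intro!: sum.cong)
    also have "\<dots> = (\<Sum>k\<in>A. \<Sum>eta\<in>W (length w).
        a (k # eta) * (if x = l k then shuf (E k) (P eta) w else 0))"
      by (simp add: sum.cartesian_product P_Cons)
    also have "\<dots> = (\<Sum>k\<in>A. shuf (if x = l k then E k else (\<lambda>_. 0)) (word_series A P (lshift k a)) w)"
      unfolding word_series_def
      by (intro sum.cong refl, subst shuf_infsum_finite_support[OF W])
         (auto simp: lshift_apply outside)
    finally show ?thesis .
  qed
  show ?thesis
    unfolding subst_op_def using A series_Nil series_Cons by blast
qed

section \<open>Composition and mixed composition\<close>

definition with_one :: "vser \<Rightarrow> nat \<Rightarrow> ser" where
  "with_one h i = (if i = 0 then ser1 else h i)"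

definition ser_mixcomp :: "nat \<Rightarrow> vser \<Rightarrow> ser \<Rightarrow> ser" where
  "ser_mixcomp m h = word_series {..m} (\<lambda>eta. phibar h eta ser1)"

definition ser_comp :: "nat \<Rightarrow> vser \<Rightarrow> ser \<Rightarrow> ser" where
  "ser_comp q e = word_series {..q} (\<lambda>eta. psi e eta ser1)"

lemma mixcomp_eq_ser_mixcomp: "mixcomp m c h = (\<lambda>j. ser_mixcomp m h (c j))"
  by (simp add: mixcomp_def ser_mixcomp_def word_series_def)

lemma comp_eq_ser_comp: "comp q c e = (\<lambda>j. ser_comp q e (c j))"
  by (simp add: comp_def ser_comp_def word_series_def)

lemma subst_op_ser_mixcomp:
  "subst_op {..m} (\<lambda>x k. if x = k then with_one h k else (\<lambda>_. 0)) (ser_mixcomp m h)"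
  unfolding ser_mixcomp_def by (rule subst_op_word_series) (simp_all add: with_one_def)

lemma subst_op_ser_comp:
  "subst_op {..q} (\<lambda>x k. if x = 0 then with_one e k else (\<lambda>_. 0)) (ser_comp q e)"
  unfolding ser_comp_def by (rule subst_op_word_series) (simp_all add: with_one_def)

lemmas ser_mixcomp_ser1[simp] = subst_op_ser1[OF subst_op_ser_mixcomp]
  and ser_mixcomp_shuf = subst_op_shuf[OF subst_op_ser_mixcomp]
  and ser_comp_ser1[simp] = subst_op_ser1[OF subst_op_ser_comp]
  and ser_comp_shuf = subst_op_shuf[OF subst_op_ser_comp]

lemma ser_mixcomp_cong_less:
  assumes "\<And>i v. i \<in> {1..m} \<Longrightarrow> length v < length w \<Longrightarrow> h i v = h' i v"
  shows "ser_mixcomp m h a w = ser_mixcomp m h' a w"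
  by (rule subst_op_cong_less[OF subst_op_ser_mixcomp subst_op_ser_mixcomp])
     (use assms in \<open>auto simp: with_one_def\<close>)

lemma ser_mixcomp_cong:
  assumes "\<And>i. i \<in> {1..m} \<Longrightarrow> h i = h' i"
  shows "ser_mixcomp m h = ser_mixcomp m h'"
  by (rule subst_op_unique[OF subst_op_ser_mixcomp subst_op_ser_mixcomp])
     (use assms in \<open>auto simp: with_one_def\<close>)

lemma ser_comp_cong_less:
  assumes "\<And>i v. i \<in> {1..q} \<Longrightarrow> length v < length w \<Longrightarrow> e i v = e' i v"
  shows "ser_comp q e a w = ser_comp q e' a w"
  by (rule subst_op_cong_less[OF subst_op_ser_comp subst_op_ser_comp])
     (use assms in \<open>auto simp: with_one_def\<close>)

lemma ser_mixcomp_vone: "set w \<subseteq> {..m} \<Longrightarrow> ser_mixcomp m vone a w = a w"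
proof (induction w arbitrary: a)
  case (Cons x w)
  have "shuf (if x = k then with_one vone k else (\<lambda>_. 0)) s w = (if k = x then s w else 0)" for k s
    by (simp add: with_one_def vone_def)
  with Cons show ?case
    by (simp add: subst_op_Cons[OF subst_op_ser_mixcomp] lshift_apply)
qed (simp add: subst_op_Nil[OF subst_op_ser_mixcomp])

lemma ser_mixcomp_ser_mixcomp:
  "ser_mixcomp m b (ser_mixcomp m a c) = ser_mixcomp m (\<lambda>i. shuf (ser_mixcomp m b (a i)) (b i)) c"
proof -
  have "ser_mixcomp m b \<circ> ser_mixcomp m a = ser_mixcomp m (\<lambda>i. shuf (ser_mixcomp m b (a i)) (b i))"
  proof (rule subst_op_unique[OF subst_op_comp[OF subst_op_ser_mixcomp subst_op_ser_mixcomp]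
        subst_op_ser_mixcomp], rule ext)
    fix x i w assume "i \<in> {..m}"
    then show "(\<Sum>j\<in>{..m}. shuf (if x = j then with_one b j else (\<lambda>_. 0))
          (ser_mixcomp m b (if j = i then with_one a i else (\<lambda>_. 0))) w)
        = (if x = i then with_one (\<lambda>i. shuf (ser_mixcomp m b (a i)) (b i)) i else (\<lambda>_. 0)) w"
      by (simp add: subst_op_sum_shuf_delta[OF subst_op_ser_mixcomp] with_one_def shuf_commute)
  qed
  then show ?thesis by (metis comp_apply)
qed

lemma ser_mixcomp_ser_comp: "ser_mixcomp m b (ser_comp q e a) = ser_comp q (\<lambda>j. ser_mixcomp m b (e j)) a"
proof -
  have "ser_mixcomp m b \<circ> ser_comp q e = ser_comp q (\<lambda>j. ser_mixcomp m b (e j))"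
  proof (rule subst_op_unique[OF subst_op_comp[OF subst_op_ser_comp subst_op_ser_mixcomp]
        subst_op_ser_comp], rule ext)
    fix x i w
    show "(\<Sum>j\<in>{..m}. shuf (if x = j then with_one b j else (\<lambda>_. 0))
          (ser_mixcomp m b (if j = 0 then with_one e i else (\<lambda>_. 0))) w)
        = (if x = 0 then with_one (\<lambda>j. ser_mixcomp m b (e j)) i else (\<lambda>_. 0)) w"
      by (simp add: subst_op_sum_shuf_delta[OF subst_op_ser_mixcomp] with_one_def)
  qed
  then show ?thesis by (metis comp_apply)
qed

section \<open>The feedback product\<close>

lemma pimp_vone: "pimp m vone"
  by (simp add: pimp_def vone_def)

lemma pimp_vshuf: "pimp m d1 \<Longrightarrow> pimp m d2 \<Longrightarrow> pimp m (vshuf d1 d2)"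
  by (simp add: pimp_def vshuf_def)

lemma cinv_fixpoint: "cinv m g = mixcomp m (vshinv g) (cinv m g)"
proof -
  have "causal_on UNIV (mixcomp m (vshinv g))"
    by (rule causal_onI) (auto simp: mixcomp_eq_ser_mixcomp intro!: ser_mixcomp_cong_less)
  then show ?thesis
    unfolding cinv_def by (rule theI'[OF causal_on_UNIV_ex1_fixpoint])
qed

lemma cinv_comp_vshinv:
  assumes d: "pimp m d" and i: "i \<in> {1..m}"
  shows "cinv m (comp q (vshinv d) c) i = ser_comp q (fbp m q c d) (d i)"
proof -
  define h where "h = cinv m (comp q (vshinv d) c)"
  define y where "y = fbp m q c d"
  define g where "g = ser_comp q c (shinv (d i))"
  have y: "y = (\<lambda>j. ser_mixcomp m h (c j))"
    by (simp add: y_def h_def fbp_def mixcomp_eq_ser_mixcomp)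
  have h_i: "h i = ser_mixcomp m h (shinv g)"
    using fun_cong[OF cinv_fixpoint, of m "comp q (vshinv d) c" i]
    by (simp add: h_def g_def mixcomp_eq_ser_mixcomp comp_eq_ser_comp vshinv_def)
  have d0: "d i [] \<noteq> 0"
    using d i by (simp add: pimp_def)
  then have "g [] \<noteq> 0"
    using shinv_Nil[of "d i"] d0 by (auto simp: g_def subst_op_Nil[OF subst_op_ser_comp])
  txt \<open>Applying the homomorphism ser_mixcomp m h to g \<bullet> g\<inverse> = 1 exhibits h i as the
    shuffle inverse of (d i)\<inverse> \<circ> y, and so does d i \<circ> y.\<close>
  then have "ser1 = ser_mixcomp m h (shuf g (shinv g))"
    by (simp add: shuf_shinv)
  also have "\<dots> = shuf (ser_comp q y (shinv (d i))) (h i)"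
    by (simp add: ser_mixcomp_shuf g_def ser_mixcomp_ser_comp y h_i)
  finally have "shuf (ser_comp q y (shinv (d i))) (h i) = ser1" ..
  moreover have "shuf (ser_comp q y (shinv (d i))) (ser_comp q y (d i)) = ser1"
    by (simp add: ser_comp_shuf[symmetric] shuf_commute[of "shinv (d i)"] shuf_shinv[of "d i", OF d0])
  ultimately show ?thesis
    unfolding h_def[symmetric] y_def[symmetric] by (rule shuf_inverse_unique)
qed

lemma fbp_fixpoint:
  assumes "pimp m d"
  shows "fbp m q c d j = ser_mixcomp m (\<lambda>i. ser_comp q (fbp m q c d) (d i)) (c j)"
proof -
  have "ser_mixcomp m (cinv m (comp q (vshinv d) c))
      = ser_mixcomp m (\<lambda>i. ser_comp q (fbp m q c d) (d i))"
    by (rule ser_mixcomp_cong) (rule cinv_comp_vshinv[OF assms])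
  then show ?thesis
    by (simp add: fbp_def[of m q c d] mixcomp_eq_ser_mixcomp)
qed

lemma fbp_fixpoint_unique:
  assumes y: "\<And>j. j \<in> {1..q} \<Longrightarrow> y j = ser_mixcomp m (\<lambda>i. ser_comp q y (d i)) (c j)"
    and y': "\<And>j. j \<in> {1..q} \<Longrightarrow> y' j = ser_mixcomp m (\<lambda>i. ser_comp q y' (d i)) (c j)"
    and j: "j \<in> {1..q}"
  shows "y j = y' j"
proof (rule causal_on_fixpoint_unique[OF _ y y' j])
  show "causal_on {1..q} (\<lambda>y j. ser_mixcomp m (\<lambda>i. ser_comp q y (d i)) (c j))"
    by (rule causal_onI) (auto intro!: ser_mixcomp_cong_less ser_comp_cong_less)
qed

lemma fbp_fbp_fixpoint:
  assumes "pimp m d1" "pimp m d2"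
  shows "fbp m q (fbp m q c d1) d2 j
    = ser_mixcomp m (\<lambda>i. ser_comp q (fbp m q (fbp m q c d1) d2) (vshuf d1 d2 i)) (c j)"
    (is "?y j = _")
proof -
  define y where "y = ?y"
  define h where "h i = ser_comp q y (d2 i)" for i
  have y_eq: "y = (\<lambda>j. ser_mixcomp m h (fbp m q c d1 j))"
    unfolding y_def h_def by (rule ext) (rule fbp_fixpoint[OF assms(2)])
  have "y j = ser_mixcomp m h (ser_mixcomp m (\<lambda>i. ser_comp q (fbp m q c d1) (d1 i)) (c j))"
    by (simp add: y_eq fbp_fixpoint[OF assms(1)])
  also have "\<dots> = ser_mixcomp m (\<lambda>i. shuf (ser_comp q y (d1 i)) (ser_comp q y (d2 i))) (c j)"
    by (simp add: ser_mixcomp_ser_mixcomp ser_mixcomp_ser_comp y_eq[symmetric] h_def)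
  also have "\<dots> = ser_mixcomp m (\<lambda>i. ser_comp q y (vshuf d1 d2 i)) (c j)"
    by (simp add: vshuf_def ser_comp_shuf)
  finally show ?thesis by (simp only: y_def)
qed

theorem theorem16:
  fixes m q :: nat and c d1 d2 :: vser
  assumes "pimp m d1" and "pimp m d2"
  shows "ser_eq q m (fbp m q c vone) c
    \<and> ser_eq q m (fbp m q (fbp m q c d1) d2) (fbp m q c (vshuf d1 d2))"
proof
  have "fbp m q c vone j = ser_mixcomp m vone (c j)" for j
    using fbp_fixpoint[OF pimp_vone] by (simp add: vone_def)
  then show "ser_eq q m (fbp m q c vone) c"
    by (simp add: ser_eq_def ser_mixcomp_vone)
  show "ser_eq q m (fbp m q (fbp m q c d1) d2) (fbp m q c (vshuf d1 d2))"
    unfolding ser_eq_def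
    using fbp_fixpoint_unique[OF fbp_fbp_fixpoint[OF assms] fbp_fixpoint[OF pimp_vshuf[OF assms]]]
    by simp
qed

end
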